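(* Let $G,H$ be simple graphs, $k\in\mathbb N$, and let $\Phi$ be a level-$k$ quantum isomorphism map from $G$ to $H$. Then $\Phi(\boldsymbol F_GX)=\boldsymbol F_H\Phi(X)$ and $\Phi(X\boldsymbol F_G)=\Phi(X)\boldsymbol F_H$ for all $\boldsymbol F\in\mathcal Q_k$ and all $X\in\mathbb C^{V(G)^k\times V(G)^k}$.
   Context: Homomorphism tensors: for a $(k,k)$-bilabelled graph $\boldsymbol F=(F,\boldsymbol u,\boldsymbol v)$ ($\boldsymbol u,\boldsymbol v\in V(F)^k$), $\boldsymbol F_G\in\mathbb C^{V(G)^k\times V(G)^k}$ has $(\boldsymbol x,\boldsymbol y)$-entry the number of homomorphisms $h:F\to G$ with $h(u_i)=x_i$, $h(v_i)=y_i$. Bilabelled minors: via edge contraction, edge deletion, deletion of unlabelled vertices. $\boldsymbol C_k$: vertices $[2k]$, in-labels $(1,\dots,k)$, out-labels $(k+1,\dots,2k)$, edges $\{i,i+1\}$ ($i\in[2k]\setminus\{k,2k\}$), $\{1,k+1\},\{k,2k\}$; $\boldsymbol M_k$: same vertices/labels, edges $\{i,i+k\}$, $i\in[k]$. $\mathcal Q_k^P,\mathcal Q_k^S$ = bilabelled minors of $\boldsymbol C_k,\boldsymbol M_k$; $\mathcal Q_k$ their union. For $\sigma\in\mathfrak S_{2k}$, $(X^\sigma)_{\boldsymbol z}=X_{\boldsymbol w}$ with $w_{\sigma(i)}=z_i$ (index pairs viewed as $2k$-tuples). $\mathscr C_k$ = cyclic group of rotations of the cyclic sequence $(1,\dots,k,2k,\dots,k+1)$.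 A level-$k$ quantum isomorphism map from $G$ to $H$ is a linear $\Phi:\mathbb{C}^{V(G)^k\times V(G)^k}\to\mathbb{C}^{V(H)^k\times V(H)^k}$ that is completely positive, with $\Phi(\boldsymbol F_G\odot X)=\boldsymbol F_H\odot\Phi(X)$ for $\boldsymbol F\in\mathcal Q_k^P$ and all $X$ ($\odot$ entrywise), $\Phi(I)=I=\Phi^*(I)$, $\Phi(J)=J=\Phi^*(J)$ ($J$ all-ones, $\Phi^*$ the trace-inner-product adjoint), $\Phi(\boldsymbol F_G)=\boldsymbol F_H$ for all $\boldsymbol F\in\mathcal Q_k$, and $\Phi(X^\sigma)=\Phi(X)^\sigma$ for $\sigma\in\mathscr C_k$. *)

theory Defs
  imports Complex_Main "HOL-Library.FuncSet"
begin

text \<open>A (k,k)-bilabelled graph: finite vertex set (natural numbers), a set of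
  edges (each a 2-element subset of the vertex set), in-labels and out-labels
  (lists of length k).\<close>
type_synonym bgraph = "nat set \<times> nat set set \<times> nat list \<times> nat list"

definition bV :: "bgraph \<Rightarrow> nat set" where "bV F = fst F"
definition bE :: "bgraph \<Rightarrow> nat set set" where "bE F = fst (snd F)"
definition bin :: "bgraph \<Rightarrow> nat list" where "bin F = fst (snd (snd F))"
definition bout :: "bgraph \<Rightarrow> nat list" where "bout F = snd (snd (snd F))"

inductive_set bminors :: "bgraph \<Rightarrow> bgraph set" for F0 :: bgraph where
  self: "F0 \<in> bminors F0"
| del_edge: "(V, E, u, v) \<in> bminors F0 \<Longrightarrow> e \<in> E \<Longrightarrow> (V, E - {e}, u, v) \<in> bminors F0"
| del_vertex: "(V, E, u, v) \<in> bminors F0 \<Longrightarrow> w \<in> V \<Longrightarrow> w \<notin> set u \<Longrightarrow> w \<notin> set v \<Longrightarrow>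
     (V - {w}, {e \<in> E. w \<notin> e}, u, v) \<in> bminors F0"
| contract: "(V, E, u, v) \<in> bminors F0 \<Longrightarrow> {a, b} \<in> E \<Longrightarrow> a \<noteq> b \<Longrightarrow>
     (V - {b}, (\<lambda>e. (\<lambda>x. if x = b then a else x) ` e) ` (E - {{a, b}}),
      map (\<lambda>x. if x = b then a else x) u, map (\<lambda>x. if x = b then a else x) v) \<in> bminors F0"

text \<open>C_k and M_k (0-indexed: vertices 0..2k-1, in-labels 0..k-1, out-labels k..2k-1).\<close>
definition Ck :: "nat \<Rightarrow> bgraph" where
  "Ck k = ({..<2*k},
           {{i, i+1} | i. i < 2*k \<and> i \<noteq> k - 1 \<and> i \<noteq> 2*k - 1}
             \<union> (if k = 0 then {} else {{0, k}, {k - 1, 2*k - 1}}),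
           [0..<k], [k..<2*k])"

definition Mk :: "nat \<Rightarrow> bgraph" where
  "Mk k = ({..<2*k}, {{i, i+k} | i. i < k}, [0..<k], [k..<2*k])"

definition QP :: "nat \<Rightarrow> bgraph set" where "QP k = bminors (Ck k)"
definition QS :: "nat \<Rightarrow> bgraph set" where "QS k = bminors (Mk k)"
definition Q :: "nat \<Rightarrow> bgraph set" where "Q k = QP k \<union> QS k"

type_synonym 'v kmat = "'v list \<Rightarrow> 'v list \<Rightarrow> complex"

definition tuples :: "nat \<Rightarrow> 'v list set" where "tuples k = {x. length x = k}"

text \<open>The space C^{V^k x V^k}: functions vanishing outside pairs of k-tuples.\<close>
definition Mat :: "nat \<Rightarrow> 'v kmat set" where
  "Mat k = {X. \<forall>x y. X x y \<noteq> 0 \<longrightarrow> length x = k \<and> length y = k}"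

definition mmult :: "nat \<Rightarrow> 'v kmat \<Rightarrow> 'v kmat \<Rightarrow> 'v kmat" where
  "mmult k A B = (\<lambda>x y. \<Sum>z\<in>tuples k. A x z * B z y)"

definition hadamard :: "'v kmat \<Rightarrow> 'v kmat \<Rightarrow> 'v kmat" where
  "hadamard A B = (\<lambda>x y. A x y * B x y)"

definition idm :: "nat \<Rightarrow> 'v kmat" where
  "idm k = (\<lambda>x y. if length x = k \<and> x = y then 1 else 0)"

definition onesm :: "nat \<Rightarrow> 'v kmat" where
  "onesm k = (\<lambda>x y. if length x = k \<and> length y = k then 1 else 0)"

definition tinner :: "nat \<Rightarrow> 'v kmat \<Rightarrow> 'v kmat \<Rightarrow> complex" where
  "tinner k A B = (\<Sum>x\<in>tuples k. \<Sum>y\<in>tuples k. cnj (A x y) * B x y)"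

definition is_hom :: "bgraph \<Rightarrow> ('v \<Rightarrow> 'v \<Rightarrow> bool) \<Rightarrow> (nat \<Rightarrow> 'v) \<Rightarrow> bool" where
  "is_hom F A h \<longleftrightarrow> (\<forall>e\<in>bE F. \<forall>a\<in>e. \<forall>b\<in>e. a \<noteq> b \<longrightarrow> A (h a) (h b))"

definition homT :: "bgraph \<Rightarrow> ('v \<Rightarrow> 'v \<Rightarrow> bool) \<Rightarrow> 'v kmat" where
  "homT F A = (\<lambda>x y. of_nat (card {h \<in> bV F \<rightarrow>\<^sub>E (UNIV :: 'v set).
       is_hom F A h \<and> map h (bin F) = x \<and> map h (bout F) = y}))"

text \<open>(X^sigma)_z = X_w with w_(sigma i) = z_i, index pairs (x,y) viewed as the
  2k-tuple x@y (0-indexed).\<close>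
definition permact :: "nat \<Rightarrow> (nat \<Rightarrow> nat) \<Rightarrow> 'v kmat \<Rightarrow> 'v kmat" where
  "permact k \<sigma> X = (\<lambda>x y. if length x = k \<and> length y = k then
      (let z = x @ y; w = map (\<lambda>j. z ! inv_into {..<2*k} \<sigma> j) [0..<2*k]
       in X (take k w) (drop k w)) else 0)"

text \<open>The cyclic sequence (1,...,k,2k,...,k+1), 0-indexed: position i holds cseq k i.\<close>
definition cseq :: "nat \<Rightarrow> nat \<Rightarrow> nat" where
  "cseq k i = (if i < k then i else 3*k - 1 - i)"

text \<open>Rotation by m steps along the cyclic sequence (cseq k is its own inverse on {..<2k}).\<close>
definition rot :: "nat \<Rightarrow> nat \<Rightarrow> nat \<Rightarrow> nat" where
  "rot k m j = (if j < 2*k then cseq k ((cseq k j + m) mod (2*k)) else j)"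

definition cycgrp :: "nat \<Rightarrow> (nat \<Rightarrow> nat) set" where
  "cycgrp k = {rot k m | m. m < 2*k}"

definition psd :: "'i set \<Rightarrow> ('i \<Rightarrow> 'i \<Rightarrow> complex) \<Rightarrow> bool" where
  "psd I M \<longleftrightarrow> (\<forall>a\<in>I. \<forall>b\<in>I. M a b = cnj (M b a)) \<and>
     (\<forall>v. 0 \<le> Re (\<Sum>a\<in>I. \<Sum>b\<in>I. cnj (v a) * M a b * v b))"

definition completely_positive ::
  "nat \<Rightarrow> ('g kmat \<Rightarrow> 'h kmat) \<Rightarrow> bool" where
  "completely_positive k \<Phi> \<longleftrightarrow>
     (\<forall>n (X :: nat \<Rightarrow> nat \<Rightarrow> 'g kmat). (\<forall>i j. X i j \<in> Mat k) \<longrightarrow>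
        psd ({..<n} \<times> tuples k) (\<lambda>(i, x) (j, y). X i j x y) \<longrightarrow>
        psd ({..<n} \<times> tuples k) (\<lambda>(i, x) (j, y). \<Phi> (X i j) x y))"

text \<open>Simple graphs are given by a symmetric irreflexive adjacency relation on a
  finite vertex type. The adjoint conditions Phi*(I)=I, Phi*(J)=J are written out
  via the defining property of the adjoint w.r.t. the trace inner product.\<close>
definition qiso_map ::
  "nat \<Rightarrow> ('g \<Rightarrow> 'g \<Rightarrow> bool) \<Rightarrow> ('h \<Rightarrow> 'h \<Rightarrow> bool) \<Rightarrow> ('g kmat \<Rightarrow> 'h kmat) \<Rightarrow> bool" where
  "qiso_map k AG AH \<Phi> \<longleftrightarrow>
     (\<forall>X\<in>Mat k. \<Phi> X \<in> Mat k) \<and>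
     (\<forall>X\<in>Mat k. \<forall>Y\<in>Mat k. \<Phi> (\<lambda>x y. X x y + Y x y) = (\<lambda>x y. \<Phi> X x y + \<Phi> Y x y)) \<and>
     (\<forall>X\<in>Mat k. \<forall>c. \<Phi> (\<lambda>x y. c * X x y) = (\<lambda>x y. c * \<Phi> X x y)) \<and>
     completely_positive k \<Phi> \<and>
     (\<forall>F\<in>QP k. \<forall>X\<in>Mat k. \<Phi> (hadamard (homT F AG) X) = hadamard (homT F AH) (\<Phi> X)) \<and>
     \<Phi> (idm k) = idm k \<and>
     (\<forall>X\<in>Mat k. tinner k (idm k) (\<Phi> X) = tinner k (idm k) X) \<and>
     \<Phi> (onesm k) = onesm k \<and>
     (\<forall>X\<in>Mat k. tinner k (onesm k) (\<Phi> X) = tinner k (onesm k) X) \<and>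
     (\<forall>F\<in>Q k. \<Phi> (homT F AG) = homT F AH) \<and>
     (\<forall>\<sigma>\<in>cycgrp k. \<forall>X\<in>Mat k. \<Phi> (permact k \<sigma> X) = permact k \<sigma> (\<Phi> X))"

definition simple_graph :: "('v \<Rightarrow> 'v \<Rightarrow> bool) \<Rightarrow> bool" where
  "simple_graph A \<longleftrightarrow> (\<forall>x y. A x y \<longrightarrow> A y x) \<and> (\<forall>x. \<not> A x x)"

end

theory Submission
  imports Defs
begin

text \<open>
  A level-k quantum isomorphism map \<open>\<Phi>\<close> is unital, trace preserving and completely positive.
  Positivity of the Gram block matrix of \<open>(I, R, Y)\<close> under \<open>\<Phi>\<close> shows that the Schwarz gap
  \<open>\<Phi>(R\<^sup>*R) - \<Phi>(R)\<^sup>*\<Phi>(R)\<close> is positive and that, once its diagonal vanishes,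
  \<open>\<Phi>(R\<^sup>*Y) = \<Phi>(R)\<^sup>*\<Phi>(Y)\<close> for every \<open>Y\<close> (Choi's multiplicative domain).
  By trace preservation the diagonal of the gap vanishes as soon as \<open>\<Phi>\<close> preserves the
  Hilbert-Schmidt norm of \<open>R\<close>.

  Every vertex of a bilabelled minor of \<open>C\<^sub>k\<close> or \<open>M\<^sub>k\<close> carries a label, so homomorphism
  tensors of such minors are 0/1 matrices and their squared norm is their sum of entries
  \<open>\<langle>J, F\<rangle>\<close>. Since \<open>\<Phi>\<close> preserves \<open>\<langle>J, -\<rangle>\<close> and maps \<open>F\<^sub>G\<close> to \<open>F\<^sub>H\<close>, it preserves the norm
  of \<open>F\<^sub>G\<close> and of \<open>F\<^sub>G\<^sup>*\<close>, and both identities follow.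
\<close>

definition adj :: "'v kmat \<Rightarrow> 'v kmat" where
  "adj A = (\<lambda>x y. cnj (A y x))"

lemma finite_tuples: "finite (tuples k :: 'a::finite list set)"
  unfolding tuples_def using finite_lists_length_eq[of "UNIV :: 'a set" k] by simp

lemma Mat_eq_0: "X \<in> Mat k \<Longrightarrow> \<not> (length x = k \<and> length y = k) \<Longrightarrow> X x y = 0"
  unfolding Mat_def by blast

lemma Mat_eqI:
  assumes "X \<in> Mat k" "Y \<in> Mat k" "\<And>x y. x \<in> tuples k \<Longrightarrow> y \<in> tuples k \<Longrightarrow> X x y = Y x y"
  shows "X = Y"
proof (intro ext)
  fix x y show "X x y = Y x y"
    using assms Mat_eq_0[of X k x y] Mat_eq_0[of Y k x y]
    by (cases "length x = k \<and> length y = k") (auto simp: tuples_def)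
qed

lemma adj_in_Mat: "X \<in> Mat k \<Longrightarrow> adj X \<in> Mat k"
  unfolding Mat_def adj_def by auto

lemma idm_in_Mat: "idm k \<in> Mat k"
  unfolding Mat_def idm_def by auto

lemma mmult_in_Mat:
  assumes "A \<in> Mat k" "B \<in> Mat k"
  shows "mmult k A B \<in> Mat k"
  unfolding Mat_def mmult_def
  using assms Mat_eq_0[of A k] Mat_eq_0[of B k] by (auto intro: sum.neutral)

lemma adj_adj [simp]: "adj (adj A) = A"
  by (simp add: adj_def)

lemma adj_idm [simp]: "adj (idm k) = idm k"
  by (auto simp: adj_def idm_def fun_eq_iff)

lemma adj_mmult: "adj (mmult k A B) = mmult k (adj B) (adj A)"
  by (simp add: adj_def mmult_def fun_eq_iff mult.commute)

lemma mmult_idm_left: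
  fixes B :: "'a::finite kmat"
  assumes "B \<in> Mat k"
  shows "mmult k (idm k) B = B"
proof (rule Mat_eqI[OF mmult_in_Mat[OF idm_in_Mat assms] assms])
  fix x y :: "'a list" assume "x \<in> tuples k"
  then have "mmult k (idm k) B x y = (\<Sum>z\<in>tuples k. if x = z then B z y else 0)"
    unfolding mmult_def idm_def by (intro sum.cong) (auto simp: tuples_def)
  also have "\<dots> = B x y"
    using \<open>x \<in> tuples k\<close> by (simp add: finite_tuples)
  finally show "mmult k (idm k) B x y = B x y" .
qed

lemma mmult_idm_right:
  fixes A :: "'a::finite kmat"
  assumes "A \<in> Mat k"
  shows "mmult k A (idm k) = A"
proof (rule Mat_eqI[OF mmult_in_Mat[OF assms idm_in_Mat] assms])
  fix x y :: "'a list" assume "y \<in> tuples k"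
  then have "mmult k A (idm k) x y = (\<Sum>z\<in>tuples k. if y = z then A x z else 0)"
    unfolding mmult_def idm_def by (intro sum.cong) (auto simp: tuples_def)
  also have "\<dots> = A x y"
    using \<open>y \<in> tuples k\<close> by (simp add: finite_tuples)
  finally show "mmult k A (idm k) x y = A x y" .
qed

lemma tinner_idm: "tinner k (idm k) (W :: 'a::finite kmat) = (\<Sum>x\<in>tuples k. W x x)"
proof -
  have "tinner k (idm k) W = (\<Sum>x\<in>tuples k. \<Sum>y\<in>tuples k. if x = y then W x y else 0)"
    unfolding tinner_def idm_def by (intro sum.cong) (auto simp: tuples_def)
  also have "\<dots> = (\<Sum>x\<in>tuples k. W x x)"
    by (simp add: finite_tuples)
  finally show ?thesis .
qed

lemma tinner_idm_adj_mmult: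
  "tinner k (idm k) (mmult k (adj A) (A :: 'a::finite kmat)) = tinner k A A"
  unfolding tinner_idm unfolding tinner_def mmult_def adj_def by (rule sum.swap)

lemma tinner_adj_adj: "tinner k (adj A) (adj A) = tinner k A A"
  unfolding tinner_def adj_def complex_cnj_cnj by (subst sum.swap) (simp add: mult.commute)

lemma tinner_self_if_01:
  fixes A :: "'a kmat"
  assumes "\<And>x y. A x y = 0 \<or> A x y = 1"
  shows "tinner k A A = tinner k (onesm k) A"
  unfolding tinner_def onesm_def
proof (intro sum.cong refl)
  fix x y :: "'a list" assume "x \<in> tuples k" "y \<in> tuples k"
  then show "cnj (A x y) * A x y = cnj (if length x = k \<and> length y = k then 1 else 0) * A x y"
    using assms[of x y] by (auto simp: tuples_def)
qed

definition sesq ::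
  "'i set \<Rightarrow> ('i \<Rightarrow> 'i \<Rightarrow> complex) \<Rightarrow> ('i \<Rightarrow> complex) \<Rightarrow> ('i \<Rightarrow> complex) \<Rightarrow> complex" where
  "sesq T M u w = (\<Sum>a\<in>T. \<Sum>b\<in>T. cnj (u a) * M a b * w b)"

lemma psd_hermitian: "psd I M \<Longrightarrow> a \<in> I \<Longrightarrow> b \<in> I \<Longrightarrow> M a b = cnj (M b a)"
  unfolding psd_def by blast

lemma psd_sesq_nonneg: "psd I M \<Longrightarrow> 0 \<le> Re (sesq I M v v)"
  unfolding psd_def sesq_def by blast

lemma sesq_hermitian_swap:
  assumes "\<forall>a\<in>T. \<forall>b\<in>T. M' a b = cnj (M b a)"
  shows "sesq T M' w u = cnj (sesq T M u w)"
  unfolding sesq_def cnj_sum using assms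
  by (subst sum.swap) (auto intro!: sum.cong simp: mult_ac)

lemma sesq_idm:
  "sesq (tuples k) (idm k) u w = (\<Sum>x\<in>tuples k. cnj (u x) * w (x :: 'a::finite list))"
proof -
  have "sesq (tuples k) (idm k) u w = (\<Sum>x\<in>tuples k. \<Sum>y\<in>tuples k. if x = y then cnj (u x) * w y else 0)"
    unfolding sesq_def idm_def by (intro sum.cong) (auto simp: tuples_def)
  also have "\<dots> = (\<Sum>x\<in>tuples k. cnj (u x) * w x)"
    by (simp add: finite_tuples)
  finally show ?thesis .
qed

lemma sesq_unit_right:
  assumes "finite T" "y \<in> T"
  shows "sesq T M u (\<lambda>z. if z = y then b else 0) = b * (\<Sum>x\<in>T. cnj (u x) * M x y)"
  unfolding sesq_def sum_distrib_left using assms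
  by (intro sum.cong refl) (simp add: if_distrib mult_ac cong: if_cong)

lemma sesq_unit_unit:
  assumes "finite T" "x \<in> T" "y \<in> T"
  shows "sesq T M (\<lambda>z. if z = x then a else 0) (\<lambda>z. if z = y then b else 0) = cnj a * M x y * b"
proof -
  have "(\<Sum>z\<in>T. cnj (if z = x then a else 0) * M z y) = (\<Sum>z\<in>T. if z = x then cnj a * M z y else 0)"
    by (intro sum.cong) auto
  then show ?thesis
    using assms by (simp add: sesq_unit_right mult_ac)
qed

lemma psd_gram: "psd I (\<lambda>a b. \<Sum>z\<in>T. cnj (p a z) * p b z)"
  unfolding psd_def
proof (intro conjI ballI allI)
  fix a b show "(\<Sum>z\<in>T. cnj (p a z) * p b z) = cnj (\<Sum>z\<in>T. cnj (p b z) * p a z)"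
    by (simp add: mult.commute)
next
  fix v :: "_ \<Rightarrow> complex"
  define w where "w z = (\<Sum>b\<in>I. p b z * v b)" for z
  have "(\<Sum>a\<in>I. \<Sum>b\<in>I. cnj (v a) * (\<Sum>z\<in>T. cnj (p a z) * p b z) * v b)
      = (\<Sum>a\<in>I. \<Sum>b\<in>I. \<Sum>z\<in>T. cnj (v a) * cnj (p a z) * (p b z * v b))"
    by (simp add: sum_distrib_left sum_distrib_right mult_ac)
  also have "\<dots> = (\<Sum>z\<in>T. \<Sum>a\<in>I. \<Sum>b\<in>I. cnj (v a) * cnj (p a z) * (p b z * v b))"
    by (subst sum.swap, rule sum.cong[OF refl], rule sum.swap)
  also have "\<dots> = (\<Sum>z\<in>T. cnj (w z) * w z)"
    unfolding w_def cnj_sum sum_product by (simp add: mult_ac)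
  finally show "0 \<le> Re (\<Sum>a\<in>I. \<Sum>b\<in>I. cnj (v a) * (\<Sum>z\<in>T. cnj (p a z) * p b z) * v b)"
    by (simp add: sum_nonneg)
qed

lemma psd_blocks_sesq_nonneg:
  assumes "psd ({..<n} \<times> T) (\<lambda>(i, x) (j, y). G i j x y)"
  shows "0 \<le> Re (\<Sum>i<n. \<Sum>j<n. sesq T (G i j) (v i) (v j))"
proof -
  have eq: "sesq ({..<n} \<times> T) (\<lambda>(i, x) (j, y). G i j x y) (\<lambda>(i, x). v i x) (\<lambda>(i, x). v i x)
      = (\<Sum>i<n. \<Sum>j<n. sesq T (G i j) (v i) (v j))"
    unfolding sesq_def sum.cartesian_product' by (simp, intro sum.cong refl, rule sum.swap)
  from psd_sesq_nonneg[OF assms, of "\<lambda>(i, x). v i x"] show ?thesis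
    unfolding eq .
qed

lemma psd_block3_schur:
  fixes G :: "nat \<Rightarrow> nat \<Rightarrow> 'a::finite kmat"
  assumes psd: "psd ({..<3} \<times> tuples k) (\<lambda>(i, x) (j, y). G i j x y)"
    and G00: "G 0 0 = idm k" and x: "x \<in> tuples k" and y: "y \<in> tuples k"
  shows "0 \<le> Re (G 1 1 x x - mmult k (adj (G 0 1)) (G 0 1) x x)
           + 2 * Re (s * (G 1 2 x y - mmult k (adj (G 0 1)) (G 0 2) x y))
           + (cmod s)\<^sup>2 * Re (G 2 2 y y)"
proof -
  let ?T = "tuples k :: 'a list set"
  \<comment> \<open>At this vector the form equals that of the Schur complement of the identity block at \<open>(e\<^sub>x, s e\<^sub>y)\<close>.\<close>
  define v :: "nat \<Rightarrow> 'a list \<Rightarrow> complex" where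
    "v i = (if i = 0 then (\<lambda>z. - G 0 1 z x)
            else if i = 1 then (\<lambda>z. if z = x then 1 else 0) else (\<lambda>z. if z = y then s else 0))" for i
  define t where "t i j = sesq ?T (G i j) (v i) (v j)" for i j
  have swap: "t j i = cnj (t i j)" if "i < 3" "j < 3" for i j
    unfolding t_def using psd_hermitian[OF psd] that by (intro sesq_hermitian_swap) auto
  have "0 \<le> Re (\<Sum>i<3. \<Sum>j<3. t i j)"
    unfolding t_def by (rule psd_blocks_sesq_nonneg[OF psd])
  also have "Re (\<Sum>i<3. \<Sum>j<3. t i j)
      = Re (t 0 0) + Re (t 1 1) + Re (t 2 2) + 2 * Re (t 0 1) + 2 * Re (t 0 2) + 2 * Re (t 1 2)"
    using swap[of 0 1] swap[of 0 2] swap[of 1 2] by (simp add: eval_nat_numeral)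
  also have "t 0 0 = mmult k (adj (G 0 1)) (G 0 1) x x"
    by (simp add: t_def v_def G00 sesq_idm mmult_def adj_def)
  also have "t 0 1 = - mmult k (adj (G 0 1)) (G 0 1) x x"
    using x by (simp add: t_def v_def sesq_unit_right finite_tuples mmult_def adj_def sum_negf)
  also have "t 0 2 = - (s * mmult k (adj (G 0 1)) (G 0 2) x y)"
    using y by (simp add: t_def v_def sesq_unit_right finite_tuples mmult_def adj_def sum_negf)
  also have "t 1 1 = G 1 1 x x"
    using x by (simp add: t_def v_def sesq_unit_unit finite_tuples)
  also have "t 1 2 = s * G 1 2 x y"
    using x y by (simp add: t_def v_def sesq_unit_unit finite_tuples)
  also have "t 2 2 = s * cnj s * G 2 2 y y"
    using y by (simp add: t_def v_def sesq_unit_unit finite_tuples mult_ac)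
  finally show ?thesis
    by (simp add: algebra_simps flip: complex_norm_square del: of_real_power)
qed

lemma eq_0_if_quadratic_nonneg:
  fixes E :: complex and K :: real
  assumes nonneg: "\<And>s. 0 \<le> 2 * Re (s * E) + (cmod s)\<^sup>2 * K"
  shows "E = 0"
proof (rule ccontr)
  assume "E \<noteq> 0"
  then have E: "(cmod E)\<^sup>2 > 0" by simp
  define t where "t = 1 / (\<bar>K\<bar> + 1)"
  have t: "t > 0" "t * K < 1"
    unfolding t_def by (auto simp: field_simps)
  have "cnj E * E = complex_of_real ((cmod E)\<^sup>2)"
    by (metis complex_norm_square mult.commute)
  then have "Re (- (t * cnj E) * E) = - t * (cmod E)\<^sup>2"
    by (simp add: mult.assoc)
  moreover have "(cmod (- (t * cnj E)))\<^sup>2 = t\<^sup>2 * (cmod E)\<^sup>2"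
    using t by (simp add: norm_mult power_mult_distrib)
  ultimately have "0 \<le> t * (cmod E)\<^sup>2 * (t * K - 2)"
    using nonneg[of "- (t * cnj E)"] by (simp add: algebra_simps power2_eq_square)
  also have "\<dots> < 0"
    using t E by (intro mult_pos_neg) auto
  finally show False by simp
qed

lemma cp_gram_psd:
  fixes P :: "nat \<Rightarrow> 'a::finite kmat" and \<Phi> :: "'a kmat \<Rightarrow> 'b kmat"
  assumes cp: "completely_positive k \<Phi>" and P: "\<And>i. P i \<in> Mat k"
  shows "psd ({..<n} \<times> tuples k) (\<lambda>(i, x) (j, y). \<Phi> (mmult k (adj (P i)) (P j)) x y)"
proof -
  have "psd ({..<n} \<times> tuples k) (\<lambda>(i, x) (j, y). mmult k (adj (P i)) (P j) x y)"
    using psd_gram[where T = "tuples k" and p = "\<lambda>(i, x) z. P i z x"]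
    by (simp add: mmult_def adj_def case_prod_unfold)
  moreover have "\<forall>i j. mmult k (adj (P i)) (P j) \<in> Mat k"
    using P adj_in_Mat mmult_in_Mat by blast
  ultimately show ?thesis
    using cp[unfolded completely_positive_def, rule_format, of "\<lambda>i j. mmult k (adj (P i)) (P j)" n]
    by blast
qed

lemma cp_adj:
  fixes \<Phi> :: "'a::finite kmat \<Rightarrow> 'b kmat"
  assumes cp: "completely_positive k \<Phi>" and maps: "\<forall>X\<in>Mat k. \<Phi> X \<in> Mat k"
    and Z: "Z \<in> Mat k"
  shows "\<Phi> (adj Z) = adj (\<Phi> Z)"
proof (rule Mat_eqI)
  define P where "P i = (if i = 0 then idm k else Z)" for i :: nat
  have psd: "psd ({..<2} \<times> tuples k) (\<lambda>(i, x) (j, y). \<Phi> (mmult k (adj (P i)) (P j)) x y)"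
    by (rule cp_gram_psd[OF cp]) (simp add: P_def idm_in_Mat Z)
  have "mmult k (adj (P 1)) (P 0) = adj Z" "mmult k (adj (P 0)) (P 1) = Z"
    by (simp_all add: P_def mmult_idm_left mmult_idm_right Z adj_in_Mat)
  then show "\<Phi> (adj Z) x y = adj (\<Phi> Z) x y" if "x \<in> tuples k" "y \<in> tuples k" for x y
    using psd_hermitian[OF psd, of "(1, x)" "(0, y)"] that by (simp add: adj_def)
qed (use maps Z adj_in_Mat in auto)

locale unital_tp_cp_map =
  fixes k :: nat and \<Phi> :: "'a::finite kmat \<Rightarrow> 'b::finite kmat"
  assumes cp: "completely_positive k \<Phi>"
    and maps_Mat: "\<forall>X\<in>Mat k. \<Phi> X \<in> Mat k"
    and unital: "\<Phi> (idm k) = idm k"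
    and trace_preserving: "\<forall>X\<in>Mat k. tinner k (idm k) (\<Phi> X) = tinner k (idm k) X"
begin

lemma schur_ineq:
  assumes R: "R \<in> Mat k" and Y: "Y \<in> Mat k" and x: "x \<in> tuples k" and y: "y \<in> tuples k"
  shows "0 \<le> Re (\<Phi> (mmult k (adj R) R) x x - mmult k (adj (\<Phi> R)) (\<Phi> R) x x)
           + 2 * Re (s * (\<Phi> (mmult k (adj R) Y) x y - mmult k (adj (\<Phi> R)) (\<Phi> Y) x y))
           + (cmod s)\<^sup>2 * Re (\<Phi> (mmult k (adj Y) Y) y y)"
proof -
  define P where "P i = (if i = 0 then idm k else if i = 1 then R else Y)" for i :: nat
  have "psd ({..<3} \<times> tuples k) (\<lambda>(i, x) (j, y). \<Phi> (mmult k (adj (P i)) (P j)) x y)"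
    by (rule cp_gram_psd[OF cp]) (simp add: P_def idm_in_Mat R Y)
  from psd_block3_schur[OF this _ x y, of s] show ?thesis
    by (simp add: P_def mmult_idm_left idm_in_Mat R Y unital)
qed

lemma mult_adj_left:
  assumes R: "R \<in> Mat k" and Y: "Y \<in> Mat k"
    and isometric: "tinner k (\<Phi> R) (\<Phi> R) = tinner k R R"
  shows "\<Phi> (mmult k (adj R) Y) = mmult k (adj (\<Phi> R)) (\<Phi> Y)"
proof -
  note schur = schur_ineq[OF R Y]
  define gap where "gap x = Re (\<Phi> (mmult k (adj R) R) x x - mmult k (adj (\<Phi> R)) (\<Phi> R) x x)" for x
  have gap_nonneg: "0 \<le> gap x" if "x \<in> tuples k" for x
    using schur[OF that that, of 0] by (simp add: gap_def)
  have "(\<Sum>x\<in>tuples k. gap x)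
      = Re (tinner k (idm k) (\<Phi> (mmult k (adj R) R)) - tinner k (idm k) (mmult k (adj (\<Phi> R)) (\<Phi> R)))"
    unfolding gap_def tinner_idm by (simp add: sum_subtractf)
  also have "\<dots> = 0"
    using trace_preserving mmult_in_Mat[OF adj_in_Mat[OF R] R] isometric
    by (simp add: tinner_idm_adj_mmult)
  finally have gap_0: "gap x = 0" if "x \<in> tuples k" for x
    using sum_nonneg_eq_0_iff[OF finite_tuples] gap_nonneg that by blast
  show ?thesis
  proof (rule Mat_eqI)
    fix x y :: "'b list" assume x: "x \<in> tuples k" and y: "y \<in> tuples k"
    have "0 \<le> 2 * Re (s * (\<Phi> (mmult k (adj R) Y) x y - mmult k (adj (\<Phi> R)) (\<Phi> Y) x y))
             + (cmod s)\<^sup>2 * Re (\<Phi> (mmult k (adj Y) Y) y y)" for s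
      using schur[OF x y, of s] gap_0[OF x] by (simp add: gap_def)
    then show "\<Phi> (mmult k (adj R) Y) x y = mmult k (adj (\<Phi> R)) (\<Phi> Y) x y"
      using eq_0_if_quadratic_nonneg by fastforce
  qed (use maps_Mat R Y in \<open>simp_all add: adj_in_Mat mmult_in_Mat\<close>)
qed

lemma mult_left:
  assumes R: "R \<in> Mat k" and Y: "Y \<in> Mat k"
    and isometric: "tinner k (\<Phi> R) (\<Phi> R) = tinner k R R"
  shows "\<Phi> (mmult k R Y) = mmult k (\<Phi> R) (\<Phi> Y)"
proof -
  have "tinner k (\<Phi> (adj R)) (\<Phi> (adj R)) = tinner k (adj R) (adj R)"
    using isometric by (simp add: cp_adj[OF cp maps_Mat R] tinner_adj_adj)
  from mult_adj_left[OF adj_in_Mat[OF R] Y this] show ?thesis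
    by (simp add: cp_adj[OF cp maps_Mat R])
qed

lemma mult_right:
  assumes R: "R \<in> Mat k" and Y: "Y \<in> Mat k"
    and isometric: "tinner k (\<Phi> R) (\<Phi> R) = tinner k R R"
  shows "\<Phi> (mmult k Y R) = mmult k (\<Phi> Y) (\<Phi> R)"
proof -
  have "\<Phi> (mmult k Y R) = adj (\<Phi> (mmult k (adj R) (adj Y)))"
    using cp_adj[OF cp maps_Mat mmult_in_Mat[OF Y R]] by (simp add: adj_mmult)
  also have "\<dots> = adj (mmult k (adj (\<Phi> R)) (adj (\<Phi> Y)))"
    using mult_adj_left[OF R adj_in_Mat[OF Y] isometric] by (simp add: cp_adj[OF cp maps_Mat Y])
  also have "\<dots> = mmult k (\<Phi> Y) (\<Phi> R)"
    by (simp add: adj_mmult)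
  finally show ?thesis .
qed

end

lemma bminors_labels_cover:
  assumes "F \<in> bminors F0" and "length (bin F0) = k" "length (bout F0) = k"
    and "bV F0 \<subseteq> set (bin F0) \<union> set (bout F0)"
  shows "length (bin F) = k \<and> length (bout F) = k \<and> bV F \<subseteq> set (bin F) \<union> set (bout F)"
  using assms(1)
proof (induction rule: bminors.induct)
  case self
  then show ?case using assms by auto
next
  case (del_edge V E u v e)
  then show ?case by (simp add: bV_def bin_def bout_def)
next
  case (del_vertex V E u v w)
  then show ?case by (auto simp: bV_def bin_def bout_def)
next
  case (contract V E u v a b)
  then show ?case by (force simp: bV_def bin_def bout_def)
qed

lemma Q_labels_cover:
  assumes "F \<in> Q k"
  shows "length (bin F) = k \<and> length (bout F) = k \<and> bV F \<subseteq> set (bin F) \<union> set (bout F)"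
proof -
  have "F \<in> bminors (Ck k) \<or> F \<in> bminors (Mk k)"
    using assms by (auto simp: Q_def QP_def QS_def)
  then show ?thesis
    by (elim disjE bminors_labels_cover) (auto simp: Ck_def Mk_def bV_def bin_def bout_def)
qed

lemma homT_in_Mat:
  assumes "F \<in> Q k"
  shows "homT F A \<in> Mat k"
proof -
  have "length x = k \<and> length y = k" if "homT F A x y \<noteq> 0" for x y
  proof -
    from that obtain h where "map h (bin F) = x" "map h (bout F) = y"
      unfolding homT_def by (metis (mono_tags, lifting) Collect_empty_eq card.empty of_nat_0)
    then show ?thesis
      using Q_labels_cover[OF assms] by auto
  qed
  then show ?thesis
    unfolding Mat_def by blast
qed

lemma homT_0_or_1:
  assumes "F \<in> Q k"
  shows "homT F A x y = 0 \<or> homT F A x y = 1"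
proof -
  let ?S = "{h \<in> bV F \<rightarrow>\<^sub>E UNIV. is_hom F A h \<and> map h (bin F) = x \<and> map h (bout F) = y}"
  have "h = h'" if h: "h \<in> ?S" and h': "h' \<in> ?S" for h h'
  proof (rule PiE_ext)
    show "h \<in> bV F \<rightarrow>\<^sub>E UNIV" "h' \<in> bV F \<rightarrow>\<^sub>E UNIV"
      using h h' by simp_all
  next
    fix i assume "i \<in> bV F"
    moreover have "map h (bin F) = map h' (bin F)" "map h (bout F) = map h' (bout F)"
      using h h' by simp_all
    ultimately show "h i = h' i"
      using Q_labels_cover[OF assms] by auto
  qed
  then have "card ?S \<le> 1"
    by (cases "finite ?S") (simp_all add: card_le_Suc0_iff_eq)
  then show ?thesis
    unfolding homT_def by (auto simp: le_Suc_eq)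
qed

theorem lemma3p5:
  fixes AG :: "'g::finite \<Rightarrow> 'g \<Rightarrow> bool" and AH :: "'h::finite \<Rightarrow> 'h \<Rightarrow> bool"
    and k :: nat and \<Phi> :: "'g kmat \<Rightarrow> 'h kmat"
  assumes "simple_graph AG" and "simple_graph AH"
    and "qiso_map k AG AH \<Phi>"
  shows "\<forall>F\<in>Q k. \<forall>X\<in>Mat k.
           \<Phi> (mmult k (homT F AG) X) = mmult k (homT F AH) (\<Phi> X) \<and>
           \<Phi> (mmult k X (homT F AG)) = mmult k (\<Phi> X) (homT F AH)"
proof (intro ballI conjI)
  interpret unital_tp_cp_map k \<Phi>
    using assms(3) unfolding qiso_map_def unital_tp_cp_map_def by blast
  fix F and X :: "'g kmat" assume F: "F \<in> Q k" and X: "X \<in> Mat k"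
  let ?A = "homT F AG" and ?B = "homT F AH"
  have A: "?A \<in> Mat k" and \<Phi>A: "\<Phi> ?A = ?B"
    using homT_in_Mat[OF F] assms(3) F unfolding qiso_map_def by auto
  have "tinner k (onesm k) ?B = tinner k (onesm k) ?A"
    using assms(3) A unfolding qiso_map_def \<Phi>A[symmetric] by blast
  then have isometric: "tinner k (\<Phi> ?A) (\<Phi> ?A) = tinner k ?A ?A"
    by (simp add: \<Phi>A tinner_self_if_01[OF homT_0_or_1[OF F]])
  show "\<Phi> (mmult k ?A X) = mmult k ?B (\<Phi> X)"
    using mult_left[OF A X isometric] by (simp add: \<Phi>A)
  show "\<Phi> (mmult k X ?A) = mmult k (\<Phi> X) ?B"
    using mult_right[OF A X isometric] by (simp add: \<Phi>A)
qed

end
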